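(* Let $\mathcal{H}\subseteq\{0,1\}^{\mathcal{X}}$ be a concept class and let $\omega_m$ denote the clique number of $G_m(\mathcal{H})$. Then exactly one of the following holds: (1) $\omega_m=2^m$ for all $m\in\mathbb{N}$; (2) there is a polynomial $P$ such that $\omega_m\le P(m)$ for all $m\in\mathbb{N}$.
   Context: For $m\in\mathbb{N}$, a dataset of size $m$ is a sequence $S=((x_1,y_1),\dots,(x_m,y_m))\in(\mathcal{X}\times\{0,1\})^m$; a hypothesis $h\in\{0,1\}^{\mathcal{X}}$ is consistent with $S$ if $h(x_i)=y_i$ for all $i$; $S$ is $\mathcal{H}$-realizable if some $h\in\mathcal{H}$ is consistent with $S$. We write $(x,y)\in S$ if $(x,y)=(x_i,y_i)$ for some $i$. Let $V_m(\mathcal{H})$ be the set of $\mathcal{H}$-realizable datasets of size $m$. The contradiction graph of order $m$, $G_m(\mathcal{H})$, is the undirected graph with vertex set $V_m(\mathcal{H})$ in which two datasets $S,S'$ are adjacent iff there is $x\in\mathcal{X}$ with $(x,0)\in S$ and $(x,1)\in S'$. The clique number of a graph is the supremum of the sizes of its cliques. *)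

theory Defs
  imports Main "HOL-Library.Extended_Nat" "HOL-Computational_Algebra.Polynomial"
begin

text \<open>A dataset of size m is a list of m labelled examples; labels 0/1 are False/True.\<close>

definition consistent :: "('x \<Rightarrow> bool) \<Rightarrow> ('x \<times> bool) list \<Rightarrow> bool" where
  "consistent h S \<longleftrightarrow> (\<forall>i<length S. h (fst (S ! i)) = snd (S ! i))"

definition realizable :: "('x \<Rightarrow> bool) set \<Rightarrow> ('x \<times> bool) list \<Rightarrow> bool" where
  "realizable H S \<longleftrightarrow> (\<exists>h\<in>H. consistent h S)"

definition realizable_datasets :: "('x \<Rightarrow> bool) set \<Rightarrow> nat \<Rightarrow> ('x \<times> bool) list set" where
  "realizable_datasets H m = {S. length S = m \<and> realizable H S}"

definition contradicts :: "('x \<times> bool) list \<Rightarrow> ('x \<times> bool) list \<Rightarrow> bool" where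
  "contradicts S S' \<longleftrightarrow>
     (\<exists>x. ((x, False) \<in> set S \<and> (x, True) \<in> set S') \<or> ((x, False) \<in> set S' \<and> (x, True) \<in> set S))"

definition is_clique :: "('x \<Rightarrow> bool) set \<Rightarrow> nat \<Rightarrow> ('x \<times> bool) list set \<Rightarrow> bool" where
  "is_clique H m C \<longleftrightarrow> C \<subseteq> realizable_datasets H m \<and>
     (\<forall>S\<in>C. \<forall>S'\<in>C. S \<noteq> S' \<longrightarrow> contradicts S S')"

text \<open>Clique number of G_m(H): supremum of clique sizes (possibly infinite).
  An infinite clique contains finite cliques of every size, so finite cliques suffice.\<close>
definition clique_number :: "('x \<Rightarrow> bool) set \<Rightarrow> nat \<Rightarrow> enat" where
  "clique_number H m = Sup {enat (card C) | C. finite C \<and> is_clique H m C}"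

end

theory Submission
  imports Defs "HOL-Real_Asymp.Real_Asymp"
begin

(*
  Identify a dataset with the set of its labelled examples, a finite partial labelling of X.
  Two realizable datasets contradict each other exactly when these partial labellings conflict
  at some point, so a clique of G_m(H) is a family of pairwise conflicting partial labellings
  with domains of size at most m, each realizable by H.  The dichotomy is governed by the
  Littlestone dimension of H.

  No clique exceeds 2^m: for pairwise conflicting partial labellings the weights 2^-|dom S| sum
  to at most 1 (Kraft's inequality, by induction on the union of the domains).

  If H shatters mistake trees of every depth, the branches of a tree of depth m give 2^m pairwise
  contradicting realizable datasets, so the clique number is exactly 2^m.

  If H shatters no tree of depth d + 1, choose at every point z the label a z whose side of H
  shatters no tree of depth d.  The clique members labelling z by a z are realizable by that side,
  so by induction on d there are at most (2m+1)^(d-1) of them.  Any two members conflict at some z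
  where one of them carries the label a z, and double counting gives at most (2m+1)^d members.

  Since 2^m eventually exceeds every polynomial, the two alternatives exclude each other.
*)

definition conflict :: "('x \<times> bool) set \<Rightarrow> ('x \<times> bool) set \<Rightarrow> bool" where
  "conflict S S' \<longleftrightarrow> (\<exists>x y. (x, y) \<in> S \<and> (x, \<not> y) \<in> S')"

definition realizable_set :: "('x \<Rightarrow> bool) set \<Rightarrow> ('x \<times> bool) set \<Rightarrow> bool" where
  "realizable_set H S \<longleftrightarrow> (\<exists>h\<in>H. \<forall>(x, y)\<in>S. h x = y)"

lemma single_valued_not_conflict: "single_valued S \<Longrightarrow> \<not> conflict S S"
  unfolding conflict_def single_valued_def by blast

lemma realizable_set_single_valued: "realizable_set H S \<Longrightarrow> single_valued S"
  unfolding realizable_set_def single_valued_def by (metis case_prodD)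

lemma card_fst_remove_point:
  assumes "finite (fst ` S)" "(x, b) \<in> S"
  shows "card (fst ` S) = Suc (card (fst ` (S - {x} \<times> UNIV)))"
proof -
  have "fst ` (S - {x} \<times> UNIV) = fst ` S - {x}" by force
  moreover have "x \<in> fst ` S" using assms(2) by force
  ultimately show ?thesis using card_Suc_Diff1[OF assms(1)] by simp
qed

lemma pairwise_conflict_remove_point:
  assumes "pairwise conflict C" "\<forall>S\<in>C. single_valued S"
    and label: "\<forall>S\<in>C. \<forall>y. (x, y) \<in> S \<longrightarrow> y = b"
  shows "pairwise conflict ((\<lambda>S. S - {x} \<times> UNIV) ` C)" "inj_on (\<lambda>S. S - {x} \<times> UNIV) C"
proof -
  have conflict_removed: "conflict (S - {x} \<times> UNIV) (S' - {x} \<times> UNIV)"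
    if "S \<in> C" "S' \<in> C" "S \<noteq> S'" for S S'
  proof -
    from assms(1) that have "conflict S S'" by (simp add: pairwiseD)
    then obtain z y where zy: "(z, y) \<in> S" "(z, \<not> y) \<in> S'"
      unfolding conflict_def by blast
    have "z \<noteq> x" using label that(1,2) zy by (metis (full_types))
    then show ?thesis using zy unfolding conflict_def by blast
  qed
  then show "pairwise conflict ((\<lambda>S. S - {x} \<times> UNIV) ` C)"
    by (rule pairwise_imageI)
  show "inj_on (\<lambda>S. S - {x} \<times> UNIV) C"
  proof (rule inj_onI, rule ccontr)
    fix S S' assume S: "S \<in> C" "S' \<in> C" and eq: "S - {x} \<times> UNIV = S' - {x} \<times> UNIV" and "S \<noteq> S'"
    have "conflict (S - {x} \<times> UNIV) (S - {x} \<times> UNIV)"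
      using conflict_removed[OF S \<open>S \<noteq> S'\<close>] unfolding eq .
    moreover have "single_valued (S - {x} \<times> UNIV)"
      using assms(2) S(1) by (blast intro: single_valued_subset)
    ultimately show False using single_valued_not_conflict by blast
  qed
qed

lemma kraft_pairwise_conflict:
  assumes "finite D" "finite C" "pairwise conflict C" "\<forall>S\<in>C. single_valued S \<and> fst ` S \<subseteq> D"
  shows "(\<Sum>S\<in>C. (1/2::real) ^ card (fst ` S)) \<le> 1"
  using assms
proof (induction D arbitrary: C rule: finite_induct)
  case empty
  then have "C \<subseteq> {{}}" by auto
  then show ?case by (auto simp: subset_singleton_iff)
next
  case (insert x D)
  define w where "w S = (1/2::real) ^ card (fst ` S)" for S :: "('a \<times> bool) set"
  define drop where "drop S = S - {x} \<times> UNIV" for S :: "('a \<times> bool) set"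
  define C0 where "C0 = {S\<in>C. \<forall>y. (x, y) \<notin> S}"
  define Cl where "Cl b = {S\<in>C. (x, b) \<in> S}" for b
  have fin_dom: "finite (fst ` S)" if "S \<in> C" for S
    using insert.hyps(1) insert.prems(3) that finite_subset by blast
  \<comment> \<open>Removing \<open>x\<close> keeps \<open>Cl b \<union> C0\<close> pairwise conflicting and doubles the weights on \<open>Cl b\<close>.\<close>
  have half: "2 * sum w (Cl b) + sum w C0 \<le> 1" for b
  proof -
    define F where "F = Cl b \<union> C0"
    have F: "F \<subseteq> C" "finite F" "Cl b \<inter> C0 = {}"
      using insert.prems(1) by (auto simp: F_def Cl_def C0_def)
    have "\<forall>S\<in>F. \<forall>y. (x, y) \<in> S \<longrightarrow> y = b"
      using insert.prems(3) unfolding F_def Cl_def C0_def by (auto dest: single_valuedD)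
    then have "pairwise conflict (drop ` F)" "inj_on drop F" unfolding drop_def
      using pairwise_conflict_remove_point[OF pairwise_subset[OF insert.prems(2) F(1)]]
        insert.prems(3) F(1) by blast+
    moreover have "single_valued (drop S) \<and> fst ` drop S \<subseteq> D" if "S \<in> F" for S
    proof -
      have "single_valued S" "fst ` S \<subseteq> insert x D" using insert.prems(3) F(1) that by blast+
      then show ?thesis unfolding drop_def by (auto intro: single_valued_subset)
    qed
    ultimately have "sum w (drop ` F) \<le> 1"
      using insert.IH[of "drop ` F"] F(2) unfolding w_def by blast
    moreover have "w (drop S) = 2 * w S" if "S \<in> Cl b" for S
      using that card_fst_remove_point[OF fin_dom, of S x b] by (simp add: w_def drop_def Cl_def)
    moreover have "drop S = S" if "S \<in> C0" for S
      using that by (auto simp: C0_def drop_def)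
    ultimately show ?thesis
      using \<open>inj_on drop F\<close> F by (simp add: sum.reindex F_def sum.union_disjoint sum_distrib_left)
  qed
  have "C = Cl True \<union> Cl False \<union> C0"
    unfolding Cl_def C0_def by (auto, metis (full_types))
  moreover have "Cl True \<inter> Cl False = {}"
    using insert.prems(3) unfolding Cl_def by (auto dest: single_valuedD)
  moreover have "(Cl True \<union> Cl False) \<inter> C0 = {}" unfolding Cl_def C0_def by blast
  moreover have "finite (Cl b)" "finite C0" for b using insert.prems(1) by (simp_all add: Cl_def C0_def)
  ultimately have "sum w C = sum w (Cl True) + sum w (Cl False) + sum w C0"
    by (simp add: sum.union_disjoint)
  then show ?case using half[of True] half[of False] unfolding w_def by linarith
qed

lemma semicomplete_digraph_card_le:
  assumes "finite C"
    and arc: "\<And>S S'. S \<in> C \<Longrightarrow> S' \<in> C \<Longrightarrow> S \<noteq> S' \<Longrightarrow> S' \<in> N S \<or> S \<in> N S'"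
    and out_degree: "\<And>S. S \<in> C \<Longrightarrow> card (N S \<inter> C) \<le> K"
  shows "card C \<le> 2 * K + 1"
proof -
  define R where "R = Sigma C (\<lambda>S. N S \<inter> C)"
  have "card R = (\<Sum>S\<in>C. card (N S \<inter> C))"
    unfolding R_def using assms(1) by (simp add: card_SigmaI)
  also have "\<dots> \<le> card C * K"
    using sum_mono[of C "\<lambda>S. card (N S \<inter> C)" "\<lambda>_. K"] out_degree by simp
  finally have card_R: "card R \<le> card C * K" .
  have "Sigma C (\<lambda>S. C - {S}) \<subseteq> R \<union> R\<inverse>"
    using arc unfolding R_def by blast
  then have "card (Sigma C (\<lambda>S. C - {S})) \<le> card (R \<union> R\<inverse>)"
    using assms(1) by (intro card_mono) (auto simp: R_def)
  also have "\<dots> \<le> 2 * card R" using card_Un_le[of R "R\<inverse>"] by simp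
  finally have "card C * (card C - 1) \<le> card C * (2 * K)"
    using card_R assms(1) by (simp add: card_SigmaI algebra_simps)
  then show ?thesis unfolding mult_le_cancel1 by linarith
qed

lemma card_pairwise_conflict_le:
  fixes C :: "('x \<times> bool) set set" and a :: "'x \<Rightarrow> bool"
  assumes "finite C" "pairwise conflict C" "\<forall>S\<in>C. finite S \<and> card (fst ` S) \<le> m"
    and minority: "\<And>z. card {S\<in>C. (z, a z) \<in> S} \<le> G"
  shows "card C \<le> 2 * m * G + 1"
proof -
  define M where "M z = {S\<in>C. (z, a z) \<in> S}" for z
  have "card C \<le> 2 * (m * G) + 1"
  proof (rule semicomplete_digraph_card_le[where N = "\<lambda>S. \<Union>z\<in>fst ` S. M z"])
    fix S assume "S \<in> C"
    have "card ((\<Union>z\<in>fst ` S. M z) \<inter> C) = card (\<Union>z\<in>fst ` S. M z)"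
      by (rule arg_cong[where f = card]) (auto simp: M_def)
    also have "\<dots> \<le> (\<Sum>z\<in>fst ` S. card (M z))"
      using assms(3) \<open>S \<in> C\<close> by (intro card_UN_le finite_imageI) blast
    also have "\<dots> \<le> card (fst ` S) * G"
      using sum_mono[of "fst ` S" "\<lambda>z. card (M z)" "\<lambda>_. G"] minority by (simp add: M_def)
    also have "\<dots> \<le> m * G" using assms(3) \<open>S \<in> C\<close> by simp
    finally show "card ((\<Union>z\<in>fst ` S. M z) \<inter> C) \<le> m * G" .
  next
    fix S S' assume "S \<in> C" "S' \<in> C" "S \<noteq> S'"
    then obtain z y where zy: "(z, y) \<in> S" "(z, \<not> y) \<in> S'"
      using assms(2) unfolding pairwise_def conflict_def by blast
    show "S' \<in> (\<Union>z\<in>fst ` S. M z) \<or> S \<in> (\<Union>z\<in>fst ` S'. M z)"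
    proof (cases "a z = y")
      case True
      then have "S \<in> M z" using \<open>S \<in> C\<close> zy unfolding M_def by simp
      then show ?thesis using zy by force
    next
      case False
      then have "S' \<in> M z" using \<open>S' \<in> C\<close> zy unfolding M_def by (cases y) auto
      then show ?thesis using zy by force
    qed
  qed (use assms(1) in simp)
  then show ?thesis by simp
qed

text \<open>\<open>ldim_ge H d\<close>: \<open>H\<close> shatters a complete mistake tree of depth \<open>d\<close>, i.e. the Littlestone
  dimension of \<open>H\<close> is at least \<open>d\<close>.\<close>

fun ldim_ge :: "('x \<Rightarrow> bool) set \<Rightarrow> nat \<Rightarrow> bool" where
  "ldim_ge H 0 \<longleftrightarrow> H \<noteq> {}"
| "ldim_ge H (Suc d) \<longleftrightarrow> (\<exists>x. \<forall>b. ldim_ge {h\<in>H. h x = b} d)"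

lemma ldim_ge_SucD: "ldim_ge H (Suc d) \<Longrightarrow> ldim_ge H d"
proof (induction d arbitrary: H)
  case 0
  then show ?case by auto
next
  case (Suc d)
  then show ?case by (metis ldim_ge.simps(2))
qed

lemma minority_labels:
  assumes "\<not> ldim_ge H (Suc d)"
  obtains a where "\<And>z. \<not> ldim_ge {h\<in>H. h z = a z} d"
proof -
  have "\<forall>z. \<exists>b. \<not> ldim_ge {h\<in>H. h z = b} d" using assms by simp
  then show ?thesis using that by metis
qed

lemma realizable_set_restrict:
  assumes "realizable_set H S" "(z, b) \<in> S"
  shows "realizable_set {h\<in>H. h z = b} S"
proof -
  obtain h where "h \<in> H" "\<forall>(x, y)\<in>S. h x = y" using assms(1) unfolding realizable_set_def by blast
  moreover from this have "h z = b" using assms(2) by blast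
  ultimately show ?thesis unfolding realizable_set_def by (intro bexI[of _ h]) simp_all
qed

lemma ldim_ge_Suc_0_if_conflict:
  assumes "realizable_set H S" "realizable_set H S'" "conflict S S'"
  shows "ldim_ge H (Suc 0)"
proof -
  obtain z y where zy: "(z, y) \<in> S" "(z, \<not> y) \<in> S'" using assms(3) unfolding conflict_def by blast
  have "realizable_set {h\<in>H. h z = y} S" "realizable_set {h\<in>H. h z = (\<not> y)} S'"
    using realizable_set_restrict[OF assms(1) zy(1)] realizable_set_restrict[OF assms(2) zy(2)] .
  then have "{h\<in>H. h z = b} \<noteq> {}" for b
    unfolding realizable_set_def by (cases "b = y") auto
  then show ?thesis by auto
qed

lemma card_realizable_pairwise_conflict_le:
  assumes "\<not> ldim_ge H (Suc d)" "finite C" "pairwise conflict C"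
    and "\<forall>S\<in>C. realizable_set H S \<and> finite S \<and> card (fst ` S) \<le> m"
  shows "card C \<le> (2 * m + 1) ^ d"
  using assms
proof (induction d arbitrary: H C)
  case 0
  have "S = S'" if "S \<in> C" "S' \<in> C" for S S'
  proof (rule ccontr)
    assume "S \<noteq> S'"
    then have "conflict S S'" using 0(3) that by (simp add: pairwiseD)
    then have "ldim_ge H (Suc 0)" using 0(4) that ldim_ge_Suc_0_if_conflict by blast
    with 0(1) show False by blast
  qed
  then show ?case using 0 by (simp add: card_le_Suc0_iff_eq)
next
  case (Suc d)
  obtain a where a: "\<And>z. \<not> ldim_ge {h\<in>H. h z = a z} (Suc d)"
    using minority_labels Suc.prems(1) by blast
  have "card {S\<in>C. (z, a z) \<in> S} \<le> (2 * m + 1) ^ d" for z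
  proof (rule Suc.IH[OF a[of z]])
    show "finite {S\<in>C. (z, a z) \<in> S}" using Suc.prems(2) by simp
    show "pairwise conflict {S\<in>C. (z, a z) \<in> S}"
      using Suc.prems(3) by (rule pairwise_subset) blast
    show "\<forall>S\<in>{S\<in>C. (z, a z) \<in> S}. realizable_set {h\<in>H. h z = a z} S \<and> finite S \<and> card (fst ` S) \<le> m"
    proof
      fix S assume "S \<in> {S\<in>C. (z, a z) \<in> S}"
      then show "realizable_set {h\<in>H. h z = a z} S \<and> finite S \<and> card (fst ` S) \<le> m"
        using Suc.prems(4) realizable_set_restrict[of H S z "a z"] by simp
    qed
  qed
  then have "card C \<le> 2 * m * (2 * m + 1) ^ d + 1"
    using card_pairwise_conflict_le Suc.prems(2-4) by blast
  also have "\<dots> \<le> (2 * m + 1) ^ Suc d"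
    using one_le_power[of "2 * m + 1" d] by (simp add: algebra_simps)
  finally show ?case .
qed

lemma consistent_iff: "consistent h S \<longleftrightarrow> (\<forall>(x, y)\<in>set S. h x = y)"
  by (simp add: consistent_def all_set_conv_all_nth split_def)

lemma realizable_iff_realizable_set: "realizable H S \<longleftrightarrow> realizable_set H (set S)"
  unfolding realizable_def realizable_set_def consistent_iff ..

lemma contradicts_iff_conflict: "contradicts S S' \<longleftrightarrow> conflict (set S) (set S')"
  unfolding contradicts_def conflict_def by (metis (full_types))

lemma clique_set_image:
  assumes "is_clique H m C"
  shows "inj_on set C" "pairwise conflict (set ` C)"
    and "\<forall>S\<in>set ` C. realizable_set H S \<and> finite S \<and> card (fst ` S) \<le> m"
proof -
  have members: "length S = m" "realizable_set H (set S)" if "S \<in> C" for S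
    using assms that unfolding is_clique_def realizable_datasets_def realizable_iff_realizable_set by auto
  have conflicts: "conflict (set S) (set S')" if "S \<in> C" "S' \<in> C" "S \<noteq> S'" for S S'
    using assms that unfolding is_clique_def contradicts_iff_conflict by blast
  show "inj_on set C"
  proof (rule inj_onI, rule ccontr)
    fix S S' assume "S \<in> C" "S' \<in> C" "set S = set S'" "S \<noteq> S'"
    then have "conflict (set S) (set S)" using conflicts by metis
    then show False
      using members(2)[OF \<open>S \<in> C\<close>] realizable_set_single_valued single_valued_not_conflict by blast
  qed
  show "pairwise conflict (set ` C)"
    using conflicts by (intro pairwise_imageI)
  have "card (fst ` set S) \<le> m" if "S \<in> C" for S
    using card_image_le[of "set S" fst] card_length[of S] members(1)[OF that] by simp
  then show "\<forall>S\<in>set ` C. realizable_set H S \<and> finite S \<and> card (fst ` S) \<le> m"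
    using members(2) by blast
qed

lemma card_clique_le_two_power:
  assumes "is_clique H m C" "finite C"
  shows "card C \<le> 2 ^ m"
proof -
  note clique = clique_set_image[OF assms(1)]
  have "(\<Sum>S\<in>set ` C. (1/2::real) ^ card (fst ` S)) \<le> 1"
  proof (rule kraft_pairwise_conflict)
    show "finite (\<Union>S\<in>set ` C. fst ` S)" using assms(2) by simp
    show "\<forall>S\<in>set ` C. single_valued S \<and> fst ` S \<subseteq> (\<Union>S\<in>set ` C. fst ` S)"
      using clique(3) realizable_set_single_valued by blast
  qed (use assms(2) clique(2) in simp_all)
  moreover have "(\<Sum>S\<in>set ` C. (1/2::real) ^ m) \<le> (\<Sum>S\<in>set ` C. (1/2::real) ^ card (fst ` S))"
    using clique(3) by (intro sum_mono power_decreasing) auto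
  moreover have "(\<Sum>S\<in>set ` C. (1/2::real) ^ m) = card C / 2 ^ m"
    using card_image[OF clique(1)] by (simp add: field_simps)
  ultimately have "real (card C) / 2 ^ m \<le> 1" by linarith
  then have "real (card C) \<le> 2 ^ m" by (simp add: field_simps)
  then show ?thesis by (metis of_nat_le_iff of_nat_numeral of_nat_power)
qed

lemma card_clique_le_ldim:
  assumes "\<not> ldim_ge H (Suc d)" "is_clique H m C" "finite C"
  shows "card C \<le> (2 * m + 1) ^ d"
proof -
  note clique = clique_set_image[OF assms(2)]
  have "card (set ` C) \<le> (2 * m + 1) ^ d"
    using card_realizable_pairwise_conflict_le[OF assms(1)] clique(2,3) assms(3) by blast
  then show ?thesis using card_image[OF clique(1)] by simp
qed

lemma contradicts_sym: "contradicts S S' \<Longrightarrow> contradicts S' S"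
  unfolding contradicts_def by blast

lemma contradicts_Cons: "contradicts S S' \<Longrightarrow> contradicts (p # S) (p # S')"
  unfolding contradicts_def by auto

lemma contradicts_Cons_opposite: "contradicts ((x, b) # S) ((x, \<not> b) # S')"
  unfolding contradicts_def by (cases b) auto

lemma is_clique_Cons:
  assumes "is_clique {h\<in>H. h x = b} m C"
  shows "is_clique H (Suc m) ((#) (x, b) ` C)"
proof -
  have "(x, b) # S \<in> realizable_datasets H (Suc m)" if "S \<in> C" for S
  proof -
    from assms that obtain h where "h \<in> H" "h x = b" "consistent h S" "length S = m"
      unfolding is_clique_def realizable_datasets_def realizable_def by blast
    then show ?thesis unfolding realizable_datasets_def realizable_def consistent_iff by auto
  qed
  moreover have "contradicts ((x, b) # S) ((x, b) # S')" if "S \<in> C" "S' \<in> C" "S \<noteq> S'" for S S'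
    using assms that contradicts_Cons unfolding is_clique_def by blast
  ultimately show ?thesis unfolding is_clique_def by blast
qed

lemma is_clique_Un:
  assumes "is_clique H m C" "is_clique H m C'" "\<forall>S\<in>C. \<forall>S'\<in>C'. contradicts S S'"
  shows "is_clique H m (C \<union> C')"
  using assms contradicts_sym unfolding is_clique_def by (metis Un_iff Un_subset_iff)

lemma ldim_ge_imp_clique: "ldim_ge H m \<Longrightarrow> \<exists>C. finite C \<and> is_clique H m C \<and> card C = 2 ^ m"
proof (induction m arbitrary: H)
  case 0
  then have "is_clique H 0 {[]}"
    unfolding is_clique_def realizable_datasets_def realizable_def consistent_def by auto
  then show ?case by (intro exI[of _ "{[]}"]) simp
next
  case (Suc m)
  then obtain x where x: "\<forall>b. ldim_ge {h\<in>H. h x = b} m" by auto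
  then obtain C0 C1 where
    C0: "finite C0" "is_clique {h\<in>H. h x = False} m C0" "card C0 = 2 ^ m" and
    C1: "finite C1" "is_clique {h\<in>H. h x = True} m C1" "card C1 = 2 ^ m"
    using Suc.IH[of "{h\<in>H. h x = False}"] Suc.IH[of "{h\<in>H. h x = True}"] x by blast
  let ?C = "(#) (x, False) ` C0 \<union> (#) (x, True) ` C1"
  have "is_clique H (Suc m) ?C"
    using is_clique_Cons[OF C0(2)] is_clique_Cons[OF C1(2)] contradicts_Cons_opposite[of x False]
    by (intro is_clique_Un) auto
  moreover have "card ?C = 2 ^ Suc m"
    using C0 C1 by (subst card_Un_disjoint) (auto simp: card_image)
  moreover have "finite ?C" using C0(1) C1(1) by simp
  ultimately show ?case by blast
qed

lemma exists_poly_less_two_power: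
  fixes P :: "real poly"
  shows "\<exists>m::nat. poly P (real m) < 2 ^ m"
proof -
  have "((\<lambda>m::nat. coeff P i * real m ^ i / 2 ^ m) \<longlongrightarrow> 0) sequentially" for i
    by real_asymp
  then have "((\<lambda>m::nat. \<Sum>i\<le>degree P. coeff P i * real m ^ i / 2 ^ m) \<longlongrightarrow> 0) sequentially"
    by (rule tendsto_null_sum)
  then have "((\<lambda>m::nat. poly P (real m) / 2 ^ m) \<longlongrightarrow> 0) sequentially"
    by (simp add: poly_altdef sum_divide_distrib)
  then have "eventually (\<lambda>m::nat. poly P (real m) / 2 ^ m < 1) sequentially"
    by (rule order_tendstoD) simp
  then obtain m :: nat where "poly P (real m) / 2 ^ m < 1"
    by (auto dest: eventually_happens)
  then show ?thesis by (auto simp: field_simps)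
qed

lemma clique_number_le:
  assumes "\<And>C. finite C \<Longrightarrow> is_clique H m C \<Longrightarrow> card C \<le> n"
  shows "\<exists>k. clique_number H m = enat k \<and> k \<le> n"
proof -
  have "clique_number H m \<le> enat n"
    unfolding clique_number_def using assms by (intro Sup_least) auto
  then show ?thesis by (cases "clique_number H m") auto
qed

lemma clique_number_eq_two_power:
  assumes "ldim_ge H m"
  shows "clique_number H m = enat (2 ^ m)"
proof -
  obtain C where C: "finite C" "is_clique H m C" "card C = 2 ^ m"
    using ldim_ge_imp_clique[OF assms] by blast
  then have "enat (card C) \<le> clique_number H m"
    unfolding clique_number_def by (blast intro: Sup_upper)
  moreover obtain k where "clique_number H m = enat k" "k \<le> 2 ^ m"
    using clique_number_le card_clique_le_two_power by blast
  ultimately show ?thesis using C(3) by simp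
qed

lemma clique_number_poly_bounded:
  assumes "\<not> ldim_ge H (Suc d)"
  shows "\<exists>P :: real poly. \<forall>m::nat. \<exists>k::nat. clique_number H m = enat k \<and> real k \<le> poly P (real m)"
proof (intro exI[of _ "[:1, 2:] ^ d"] allI)
  fix m :: nat
  obtain k where "clique_number H m = enat k" "k \<le> (2 * m + 1) ^ d"
    using clique_number_le card_clique_le_ldim[OF assms] by blast
  moreover have "real ((2 * m + 1) ^ d) = poly ([:1, 2:] ^ d) (real m)"
    by (simp add: poly_power mult.commute)
  ultimately show "\<exists>k. clique_number H m = enat k \<and> real k \<le> poly ([:1, 2:] ^ d) (real m)"
    by (metis of_nat_le_iff)
qed

theorem mainTheorem2:
  fixes H :: "('x \<Rightarrow> bool) set"
  defines "A \<equiv> (\<forall>m::nat. clique_number H m = enat (2 ^ m))"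
      and "B \<equiv> (\<exists>P :: real poly. \<forall>m::nat.
                 \<exists>k::nat. clique_number H m = enat k \<and> real k \<le> poly P (real m))"
  shows "(A \<or> B) \<and> \<not> (A \<and> B)"
proof
  show "A \<or> B"
  proof (cases "\<forall>d. ldim_ge H d")
    case True
    then show ?thesis unfolding A_def using clique_number_eq_two_power by blast
  next
    case False
    then obtain d where "\<not> ldim_ge H (Suc d)" using ldim_ge_SucD by blast
    then show ?thesis unfolding B_def using clique_number_poly_bounded by blast
  qed
  show "\<not> (A \<and> B)"
  proof
    assume "A \<and> B"
    then obtain P :: "real poly" where
      P: "\<forall>m::nat. \<exists>k::nat. clique_number H m = enat k \<and> real k \<le> poly P (real m)"
      and A: "\<forall>m. clique_number H m = enat (2 ^ m)"
      unfolding A_def B_def by blast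
    obtain m :: nat where m: "poly P (real m) < 2 ^ m"
      using exists_poly_less_two_power by blast
    obtain k where k: "clique_number H m = enat k" "real k \<le> poly P (real m)"
      using P by blast
    with A have "real k = 2 ^ m" by simp
    with k(2) m show False by linarith
  qed
qed

end
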